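(* Let $S$ be the geodesic spray of a Finsler function on an $n$-dimensional manifold $M$, let $\mathcal P$ be a smooth function on $\mathcal{T}M$, positively $1$-homogeneous in $y$, which is holonomy invariant with respect to $S$, and let $\lambda\in\mathbb{R}$. Let $\widetilde S=S-2\lambda\mathcal P\,\mathcal C$, and denote by $h,v,\Phi$ (resp. $\widetilde h,\widetilde v,\widetilde\Phi$) the horizontal projector, vertical projector and Jacobi endomorphism of $S$ (resp. of $\widetilde S$). Then $$\widetilde h=h-\lambda\big(\mathcal P J+d_J\mathcal P\otimes\mathcal C\big),\qquad \widetilde v=v+\lambda\big(\mathcal P J+d_J\mathcal P\otimes\mathcal C\big),$$ $$\widetilde\Phi=\Phi+\lambda^2\big(\mathcal P^2J-\mathcal P\,d_J\mathcal P\otimes\mathcal C\big).$$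
   Context: $TM$ has induced coordinates $(x^i,y^i)$, $\mathcal{T}M=TM\setminus\{0\}$, $\mathcal C=y^i\frac{\partial}{\partial y^i}$, $J=\frac{\partial}{\partial y^i}\otimes dx^i$. A spray is a vector field on $\mathcal TM$ with $JS=\mathcal C$, $[\mathcal C,S]=S$; locally $S=y^i\frac{\partial}{\partial x^i}-2G^i\frac{\partial}{\partial y^i}$. With $G^j_i=\partial G^j/\partial y^i$, $\delta_i=\frac{\partial}{\partial x^i}-G^j_i\frac{\partial}{\partial y^j}$, $\delta y^i=dy^i+G^i_jdx^j$, the horizontal and vertical projectors are $h=\delta_i\otimes dx^i$, $v=\frac{\partial}{\partial y^i}\otimes\delta y^i$. The Jacobi endomorphism is $\Phi=R^i_j\,dx^j\otimes\frac{\partial}{\partial y^i}$ with $R^i_j=2\frac{\partial G^i}{\partial x^j}-S(G^i_j)-G^i_kG^k_j$. For a function $f$ and vector $1$-form $L$, $d_Lf=df\circ L$, so $(d_J\mathcal P)(X)=(JX)(\mathcal P)$; for a $1$-form $\omega$ and vector field $Y$, $\omega\otimes Y$ is the vector $1$-form $X\mapsto\omega(X)Y$. $\mathcal P$ is holonomy invariant if $d_h\mathcal P=0$. A Finsler function $F$ is smooth positive on $\mathcal TM$, positively $1$-homogeneous, with nondegenerate $g_{ij}=\frac12\partial^2F^2/\partial y^i\partial y^j$; its geodesic spray is the spray $S$ with $i_Sdd_JE=-dE$, $E=\frac12F^2$. *)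

theory Defs
  imports "HOL-Analysis.Analysis"
begin

text \<open>A chart domain is an open set U of real^'n;
  points of TU are pairs (x,y); tangent vectors to TU at a point are pairs
  (xi,eta) = xi^i d/dx^i + eta^i d/dy^i.\<close>

type_synonym 'n tpt = "(real^'n) \<times> (real^'n)"

definition slit :: "(real^('n::finite)) set \<Rightarrow> ('n::finite) tpt set" where
  "slit U = {p. fst p \<in> U \<and> snd p \<noteq> 0}"

definition dd :: "('a::real_normed_vector \<Rightarrow> 'b::real_normed_vector) \<Rightarrow> 'a \<Rightarrow> 'a \<Rightarrow> 'b" where
  "dd f p v = frechet_derivative f (at p) v"

fun Ck_on :: "nat \<Rightarrow> 'a set \<Rightarrow> ('a::real_normed_vector \<Rightarrow> 'b::real_normed_vector) \<Rightarrow> bool" where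
  "Ck_on 0 U f = continuous_on U f"
| "Ck_on (Suc k) U f = (f differentiable_on U \<and> (\<forall>v. Ck_on k U (\<lambda>p. dd f p v)))"

definition smooth_on :: "'a set \<Rightarrow> ('a::real_normed_vector \<Rightarrow> 'b::real_normed_vector) \<Rightarrow> bool" where
  "smooth_on U f = (\<forall>k. Ck_on k U f)"

definition Jv :: "('n::finite) tpt \<Rightarrow> ('n::finite) tpt" where
  "Jv X = (0, fst X)"

definition liouville :: "('n::finite) tpt \<Rightarrow> ('n::finite) tpt" where
  "liouville p = (0, snd p)"

definition lie_bracket :: "(('n::finite) tpt \<Rightarrow> ('n::finite) tpt) \<Rightarrow> (('n::finite) tpt \<Rightarrow> ('n::finite) tpt) \<Rightarrow> ('n::finite) tpt \<Rightarrow> ('n::finite) tpt" where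
  "lie_bracket X Y p = dd Y p (X p) - dd X p (Y p)"

definition is_spray :: "(real^('n::finite)) set \<Rightarrow> (('n::finite) tpt \<Rightarrow> ('n::finite) tpt) \<Rightarrow> bool" where
  "is_spray U S \<longleftrightarrow> smooth_on (slit U) S \<and>
     (\<forall>p\<in>slit U. Jv (S p) = liouville p \<and> lie_bracket liouville S p = S p)"

text \<open>Spray coefficients G^i (S = y^i d/dx^i - 2 G^i d/dy^i), and G^i_j xi^j.\<close>
definition sprayG :: "(('n::finite) tpt \<Rightarrow> ('n::finite) tpt) \<Rightarrow> ('n::finite) tpt \<Rightarrow> real^'n" where
  "sprayG S p = - (1/2) *\<^sub>R snd (S p)"

definition GJ :: "(('n::finite) tpt \<Rightarrow> ('n::finite) tpt) \<Rightarrow> ('n::finite) tpt \<Rightarrow> real^'n \<Rightarrow> real^'n" where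
  "GJ S p xi = dd (sprayG S) p (0, xi)"

text \<open>Horizontal projector h = delta_i (x) dx^i, vertical projector v = d/dy^i (x) delta y^i.\<close>
definition hproj :: "(('n::finite) tpt \<Rightarrow> ('n::finite) tpt) \<Rightarrow> ('n::finite) tpt \<Rightarrow> ('n::finite) tpt \<Rightarrow> ('n::finite) tpt" where
  "hproj S p X = (fst X, - GJ S p (fst X))"

definition vproj :: "(('n::finite) tpt \<Rightarrow> ('n::finite) tpt) \<Rightarrow> ('n::finite) tpt \<Rightarrow> ('n::finite) tpt \<Rightarrow> ('n::finite) tpt" where
  "vproj S p X = (0, snd X + GJ S p (fst X))"

text \<open>Jacobi endomorphism: R^i_j = 2 dG^i/dx^j - S(G^i_j) - G^i_k G^k_j,
  Phi = R^i_j dx^j (x) d/dy^i.\<close>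
definition jacobiR :: "(('n::finite) tpt \<Rightarrow> ('n::finite) tpt) \<Rightarrow> ('n::finite) tpt \<Rightarrow> real^'n \<Rightarrow> real^'n" where
  "jacobiR S p xi = 2 *\<^sub>R dd (sprayG S) p (xi, 0) - dd (\<lambda>q. GJ S q xi) p (S p) - GJ S p (GJ S p xi)"

definition jacobi :: "(('n::finite) tpt \<Rightarrow> ('n::finite) tpt) \<Rightarrow> ('n::finite) tpt \<Rightarrow> ('n::finite) tpt \<Rightarrow> ('n::finite) tpt" where
  "jacobi S p X = (0, jacobiR S p (fst X))"

definition dJ :: "(('n::finite) tpt \<Rightarrow> real) \<Rightarrow> ('n::finite) tpt \<Rightarrow> ('n::finite) tpt \<Rightarrow> real" where
  "dJ f p X = dd f p (Jv X)"

definition dh :: "(('n::finite) tpt \<Rightarrow> ('n::finite) tpt) \<Rightarrow> (('n::finite) tpt \<Rightarrow> real) \<Rightarrow> ('n::finite) tpt \<Rightarrow> ('n::finite) tpt \<Rightarrow> real" where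
  "dh S f p X = dd f p (hproj S p X)"

text \<open>Exterior derivative of a 1-form alpha (evaluated on constant coordinate vectors,
  which commute): d alpha (X,Y) = X(alpha Y) - Y(alpha X).\<close>
definition ext_d :: "(('n::finite) tpt \<Rightarrow> ('n::finite) tpt \<Rightarrow> real) \<Rightarrow> ('n::finite) tpt \<Rightarrow> ('n::finite) tpt \<Rightarrow> ('n::finite) tpt \<Rightarrow> real" where
  "ext_d alpha p X Y = dd (\<lambda>q. alpha q Y) p X - dd (\<lambda>q. alpha q X) p Y"

definition pos_hom1 :: "(real^('n::finite)) set \<Rightarrow> (('n::finite) tpt \<Rightarrow> real) \<Rightarrow> bool" where
  "pos_hom1 U f \<longleftrightarrow> (\<forall>x y t. x \<in> U \<longrightarrow> y \<noteq> 0 \<longrightarrow> t > 0 \<longrightarrow> f (x, t *\<^sub>R y) = t * f (x, y))"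

definition vhess :: "(('n::finite) tpt \<Rightarrow> real) \<Rightarrow> ('n::finite) tpt \<Rightarrow> real^'n \<Rightarrow> real^'n \<Rightarrow> real" where
  "vhess f p u w = dd (\<lambda>q. dd f q (0, w)) p (0, u)"

definition finsler_g :: "(('n::finite) tpt \<Rightarrow> real) \<Rightarrow> ('n::finite) tpt \<Rightarrow> real^'n \<Rightarrow> real^'n \<Rightarrow> real" where
  "finsler_g F p u w = (1/2) * vhess (\<lambda>q. (F q)^2) p u w"

definition is_finsler :: "(real^('n::finite)) set \<Rightarrow> (('n::finite) tpt \<Rightarrow> real) \<Rightarrow> bool" where
  "is_finsler U F \<longleftrightarrow> smooth_on (slit U) F \<and> (\<forall>p\<in>slit U. F p > 0) \<and> pos_hom1 U F \<and>
     (\<forall>p\<in>slit U. \<forall>u. (\<forall>w. finsler_g F p u w = 0) \<longrightarrow> u = 0)"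

definition geodesic_spray :: "(real^('n::finite)) set \<Rightarrow> (('n::finite) tpt \<Rightarrow> real) \<Rightarrow> (('n::finite) tpt \<Rightarrow> ('n::finite) tpt) \<Rightarrow> bool" where
  "geodesic_spray U F S \<longleftrightarrow> is_spray U S \<and>
     (\<forall>p\<in>slit U. \<forall>Y. ext_d (dJ (\<lambda>q. (1/2) * (F q)^2)) p (S p) Y = - dd (\<lambda>q. (1/2) * (F q)^2) p Y)"

definition holonomy_invariant :: "(real^('n::finite)) set \<Rightarrow> (('n::finite) tpt \<Rightarrow> ('n::finite) tpt) \<Rightarrow> (('n::finite) tpt \<Rightarrow> real) \<Rightarrow> bool" where
  "holonomy_invariant U S P \<longleftrightarrow> (\<forall>p\<in>slit U. \<forall>X. dh S P p X = 0)"

end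

(*
  The deformed spray S - 2 lam P C has spray coefficients G^i + lam P y^i, hence connection
  coefficients G^i_j + lam P delta^i_j + lam (dP/dy^j) y^i; this gives the projectors at once.
  For the Jacobi endomorphism expand R^i_j = 2 dG^i/dx^j - S(G^i_j) - G^i_k G^k_j for the
  deformed spray and simplify with: G^i is 2-homogeneous (by [C,S] = S) and P is 1-homogeneous,
  so C(G^i_j) = G^i_j and C(dP/dy^j) = 0; holonomy invariance delta_j P = 0 gives S(P) = 0 and,
  differentiated vertically, S(dP/dy^j) = G^k_j dP/dy^k.  The exchanges of mixed derivatives this
  needs rest on the symmetry of second derivatives of C^2 functions, obtained from the mean value
  theorem applied to second differences.  All terms linear in lam cancel.
*)
theory Submission
  imports Defs
begin

section \<open>Directional derivatives and smoothness\<close>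

lemma has_derivative_dd: "f differentiable at p \<Longrightarrow> (f has_derivative dd f p) (at p)"
  unfolding dd_def using frechet_derivative_works by (metis (no_types) eta_contract_eq)

lemma has_derivative_imp_dd: "(f has_derivative f') (at p) \<Longrightarrow> dd f p = f'"
  unfolding dd_def using frechet_derivative_at by metis

lemma linear_dd: "f differentiable at p \<Longrightarrow> linear (dd f p)"
  using has_derivative_dd has_derivative_linear by blast

lemma linear_dd_vertical: "f differentiable at p \<Longrightarrow> linear (\<lambda>w. dd f p (0, w))"
  using linear_compose[OF bounded_linear.linear[OF
        bounded_linear_Pair[OF bounded_linear_zero bounded_linear_ident]] linear_dd]
  by (simp add: o_def)

lemma dd_diff_scaleR:
  "f differentiable at p \<Longrightarrow> dd f p (u - c *\<^sub>R v) = dd f p u - c *\<^sub>R dd f p v"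
  using linear_dd linear_diff linear_scale by metis

lemma dd_bounded_linear_map: "bounded_linear L \<Longrightarrow> dd L p = L"
  by (rule has_derivative_imp_dd[OF bounded_linear_imp_has_derivative])

lemma dd_bounded_linear_comp:
  assumes "bounded_linear L" "g differentiable at p"
  shows "dd (\<lambda>q. L (g q)) p v = L (dd g p v)"
  using has_derivative_imp_dd[OF bounded_linear.has_derivative[OF assms(1) has_derivative_dd[OF assms(2)]]]
  by simp

lemma dd_cong_open:
  assumes "open A" "p \<in> A" "\<And>q. q \<in> A \<Longrightarrow> f q = g q"
  shows "dd f p = dd g p"
proof -
  have "\<And>f'. (f has_derivative f') (at p) \<longleftrightarrow> (g has_derivative f') (at p)"
    using has_derivative_transform_within_open[OF _ assms(1,2)] assms(3) by metis
  then show ?thesis unfolding dd_def frechet_derivative_def by (simp add: fun_eq_iff)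
qed

lemma differentiable_at_cong_open:
  assumes "open A" "p \<in> A" "\<And>q. q \<in> A \<Longrightarrow> f q = g q" "f differentiable at p"
  shows "g differentiable at p"
  using assms has_derivative_transform_within_open unfolding differentiable_def by metis

lemma Ck_on_cong:
  assumes "open A" "\<And>q. q \<in> A \<Longrightarrow> f q = g q" "Ck_on k A f"
  shows "Ck_on k A g"
  using assms
proof (induction k arbitrary: f g)
  case 0
  then show ?case using continuous_on_cong by (metis Ck_on.simps(1))
next
  case (Suc k)
  have "g differentiable_on A"
    using Suc.prems differentiable_at_cong_open differentiable_on_eq_differentiable_at
    by (metis Ck_on.simps(2))
  moreover have "Ck_on k A (\<lambda>p. dd g p v)" for v
    using Suc.IH[of "\<lambda>p. dd f p v" "\<lambda>p. dd g p v"] Suc.prems dd_cong_open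
    by (metis Ck_on.simps(2))
  ultimately show ?case by simp
qed

lemma Ck_on_bounded_linear:
  assumes "open A" "bounded_linear L" "Ck_on k A f"
  shows "Ck_on k A (\<lambda>q. L (f q))"
  using assms(3)
proof (induction k arbitrary: f)
  case 0
  then show ?case
    using assms(2) continuous_on_compose2[of UNIV L A f] by (simp add: linear_continuous_on)
next
  case (Suc k)
  then have f: "\<And>q. q \<in> A \<Longrightarrow> f differentiable at q" and df: "\<And>v. Ck_on k A (\<lambda>p. dd f p v)"
    using assms(1) differentiable_on_eq_differentiable_at by auto
  have "(\<lambda>q. L (f q)) differentiable at q" if "q \<in> A" for q
    using bounded_linear.has_derivative[OF assms(2) has_derivative_dd[OF f[OF that]]]
    unfolding differentiable_def by blast
  then have "(\<lambda>q. L (f q)) differentiable_on A"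
    using assms(1) by (simp add: differentiable_on_eq_differentiable_at)
  moreover have "Ck_on k A (\<lambda>p. dd (\<lambda>q. L (f q)) p v)" for v
    using Ck_on_cong[OF assms(1) _ Suc.IH[OF df[of v]]] dd_bounded_linear_comp[OF assms(2) f]
    by metis
  ultimately show ?case by simp
qed

lemma smooth_on_Ck_on: "smooth_on A f \<Longrightarrow> Ck_on k A f"
  unfolding smooth_on_def by blast

lemma smooth_on_bounded_linear:
  "open A \<Longrightarrow> bounded_linear L \<Longrightarrow> smooth_on A f \<Longrightarrow> smooth_on A (\<lambda>q. L (f q))"
  unfolding smooth_on_def using Ck_on_bounded_linear by blast

lemma smooth_on_dd: "smooth_on A f \<Longrightarrow> smooth_on A (\<lambda>q. dd f q v)"
  unfolding smooth_on_def by (metis Ck_on.simps(2))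

lemma smooth_on_imp_differentiable_at:
  "open A \<Longrightarrow> smooth_on A f \<Longrightarrow> q \<in> A \<Longrightarrow> f differentiable at q"
  unfolding smooth_on_def
  by (metis Ck_on.simps(2) differentiable_on_eq_differentiable_at)

lemma Ck_on_2_D:
  assumes "open A" "Ck_on 2 A f"
  shows "q \<in> A \<Longrightarrow> f differentiable at q" "q \<in> A \<Longrightarrow> (\<lambda>q. dd f q v) differentiable at q"
    and "continuous_on A (\<lambda>q. dd (\<lambda>q. dd f q v) q w)"
  using assms by (auto simp: numeral_2_eq_2 differentiable_on_eq_differentiable_at)

section \<open>Symmetry of second derivatives\<close>

lemma has_real_derivative_along_line:
  fixes g :: "'a::real_normed_vector \<Rightarrow> real"
  assumes "g differentiable at (a + t *\<^sub>R u)"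
  shows "((\<lambda>s. g (a + s *\<^sub>R u)) has_real_derivative dd g (a + t *\<^sub>R u) u) (at t)"
proof -
  have line: "((\<lambda>s. a + s *\<^sub>R u) has_derivative (\<lambda>h. h *\<^sub>R u)) (at t)"
    by (auto intro!: derivative_eq_intros)
  have "((\<lambda>s. g (a + s *\<^sub>R u)) has_derivative (\<lambda>h. dd g (a + t *\<^sub>R u) (h *\<^sub>R u))) (at t)"
    using diff_chain_at[OF line has_derivative_dd[OF assms]] by (simp add: o_def)
  moreover have "(\<lambda>h. dd g (a + t *\<^sub>R u) (h *\<^sub>R u)) = (*) (dd g (a + t *\<^sub>R u) u)"
    using linear_scale[OF linear_dd[OF assms]] by (auto simp: mult.commute)
  ultimately show ?thesis unfolding has_field_derivative_def by metis
qed

lemma second_difference_mvt: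
  fixes f :: "'a::real_normed_vector \<Rightarrow> real"
  assumes s: "s > 0"
    and square: "\<And>a b. 0 \<le> a \<Longrightarrow> a \<le> s \<Longrightarrow> 0 \<le> b \<Longrightarrow> b \<le> s \<Longrightarrow> p + a *\<^sub>R v + b *\<^sub>R w \<in> A"
    and f: "\<And>q. q \<in> A \<Longrightarrow> f differentiable at q"
    and df: "\<And>q. q \<in> A \<Longrightarrow> (\<lambda>q. dd f q v) differentiable at q"
  obtains a b where "0 < a" "a < s" "0 < b" "b < s"
    "f (p + s *\<^sub>R v + s *\<^sub>R w) - f (p + s *\<^sub>R v) - f (p + s *\<^sub>R w) + f p
       = s\<^sup>2 * dd (\<lambda>q. dd f q v) (p + a *\<^sub>R v + b *\<^sub>R w) w"
proof -
  define g where "g t = f ((p + s *\<^sub>R w) + t *\<^sub>R v) - f (p + t *\<^sub>R v)" for t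
  have "DERIV g t :> dd f ((p + s *\<^sub>R w) + t *\<^sub>R v) v - dd f (p + t *\<^sub>R v) v"
    if "0 \<le> t" "t \<le> s" for t
  proof -
    have "(p + s *\<^sub>R w) + t *\<^sub>R v \<in> A" "p + t *\<^sub>R v \<in> A"
      using square[of t s] square[of t 0] that s by (simp_all add: algebra_simps)
    then show ?thesis unfolding g_def
      by (intro DERIV_diff has_real_derivative_along_line f)
  qed
  from MVT2[OF s, of g, OF this]
  obtain a where a: "0 < a" "a < s"
    and ga: "g s - g 0 = s * (dd f ((p + s *\<^sub>R w) + a *\<^sub>R v) v - dd f (p + a *\<^sub>R v) v)"
    by auto
  define h where "h r = dd f ((p + a *\<^sub>R v) + r *\<^sub>R w) v" for r
  have "DERIV h r :> dd (\<lambda>q. dd f q v) ((p + a *\<^sub>R v) + r *\<^sub>R w) w"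
    if "0 \<le> r" "r \<le> s" for r
    unfolding h_def using square[of a r] that a
    by (intro has_real_derivative_along_line df) simp
  from MVT2[OF s, of h, OF this]
  obtain b where b: "0 < b" "b < s"
    and hb: "h s - h 0 = s * dd (\<lambda>q. dd f q v) ((p + a *\<^sub>R v) + b *\<^sub>R w) w"
    by auto
  have "h s - h 0 = dd f ((p + s *\<^sub>R w) + a *\<^sub>R v) v - dd f (p + a *\<^sub>R v) v"
    unfolding h_def by (simp add: algebra_simps)
  moreover have "g s - g 0 = f (p + s *\<^sub>R v + s *\<^sub>R w) - f (p + s *\<^sub>R v) - f (p + s *\<^sub>R w) + f p"
    unfolding g_def by (simp add: algebra_simps)
  ultimately have "f (p + s *\<^sub>R v + s *\<^sub>R w) - f (p + s *\<^sub>R v) - f (p + s *\<^sub>R w) + f p = s * (h s - h 0)"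
    using ga by simp
  then show ?thesis
    using that[OF a b] hb by (simp add: power2_eq_square)
qed

lemma parallelogram_dist_less:
  fixes p v w :: "'a::real_normed_vector"
  assumes e: "e > 0"
  obtains s0 where "s0 > 0"
    "\<And>a b s. 0 \<le> a \<Longrightarrow> a \<le> s \<Longrightarrow> 0 \<le> b \<Longrightarrow> b \<le> s \<Longrightarrow> s < s0
       \<Longrightarrow> dist (p + a *\<^sub>R v + b *\<^sub>R w) p < e"
proof
  define s0 where "s0 = e / (norm v + norm w + 1)"
  have N: "norm v + norm w + 1 > 0"
    using norm_ge_zero[of v] norm_ge_zero[of w] by linarith
  show "s0 > 0" unfolding s0_def using e N by simp
  have "s0 * (norm v + norm w + 1) = e"
    unfolding s0_def using N by simp
  then have "s0 * (norm v + norm w) + s0 = e"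
    by (metis distrib_left mult.right_neutral)
  then have s0_bound: "s0 * (norm v + norm w) < e" using \<open>s0 > 0\<close> by linarith
  fix a b s :: real
  assume "0 \<le> a" "a \<le> s" "0 \<le> b" "b \<le> s" "s < s0"
  then have "dist (p + a *\<^sub>R v + b *\<^sub>R w) p \<le> a * norm v + b * norm w"
    using norm_triangle_ineq[of "a *\<^sub>R v" "b *\<^sub>R w"] by (simp add: dist_norm add.assoc)
  also have "\<dots> \<le> s0 * norm v + s0 * norm w"
    using \<open>0 \<le> a\<close> \<open>a \<le> s\<close> \<open>0 \<le> b\<close> \<open>b \<le> s\<close> \<open>s < s0\<close>
    by (intro add_mono mult_right_mono) auto
  finally show "dist (p + a *\<^sub>R v + b *\<^sub>R w) p < e"
    using s0_bound by (simp only: distrib_left)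
qed

lemma second_difference_quotient_tendsto:
  fixes f :: "'a::real_normed_vector \<Rightarrow> real"
  assumes A: "open A" and p: "p \<in> A" and f: "Ck_on 2 A f"
  shows "((\<lambda>s. (f (p + s *\<^sub>R v + s *\<^sub>R w) - f (p + s *\<^sub>R v) - f (p + s *\<^sub>R w) + f p) / s\<^sup>2)
           \<longlongrightarrow> dd (\<lambda>q. dd f q v) p w) (at_right 0)"
proof (rule tendstoI)
  fix e :: real
  assume "e > 0"
  define D where "D = (\<lambda>q. dd (\<lambda>q. dd f q v) q w)"
  have "isCont D p"
    unfolding D_def using Ck_on_2_D(3)[OF A f] continuous_on_eq_continuous_at[OF A] p by blast
  then obtain d where d: "d > 0" "\<And>q. dist q p < d \<Longrightarrow> dist (D q) (D p) < e"
    using \<open>e > 0\<close> unfolding continuous_at_eps_delta by blast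
  obtain r where r: "r > 0" "ball p r \<subseteq> A"
    using A p open_contains_ball by blast
  obtain s0 where s0: "s0 > 0"
    and near: "\<And>a b s. 0 \<le> a \<Longrightarrow> a \<le> s \<Longrightarrow> 0 \<le> b \<Longrightarrow> b \<le> s \<Longrightarrow> s < s0
                 \<Longrightarrow> dist (p + a *\<^sub>R v + b *\<^sub>R w) p < min d r"
    using parallelogram_dist_less[of "min d r" p v w] d r by auto
  show "\<forall>\<^sub>F s in at_right 0.
     dist ((f (p + s *\<^sub>R v + s *\<^sub>R w) - f (p + s *\<^sub>R v) - f (p + s *\<^sub>R w) + f p) / s\<^sup>2) (D p) < e"
    using eventually_at_right_real[OF s0]
  proof eventually_elim
    case (elim s)
    then have s: "s > 0" "s < s0" by auto
    have square: "p + a *\<^sub>R v + b *\<^sub>R w \<in> A" if "0 \<le> a" "a \<le> s" "0 \<le> b" "b \<le> s" for a b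
      using near[OF that s(2)] r(2) by (auto simp: dist_commute)
    obtain a b where ab: "0 < a" "a < s" "0 < b" "b < s"
      and eq: "f (p + s *\<^sub>R v + s *\<^sub>R w) - f (p + s *\<^sub>R v) - f (p + s *\<^sub>R w) + f p
        = s\<^sup>2 * D (p + a *\<^sub>R v + b *\<^sub>R w)"
      unfolding D_def
      by (rule second_difference_mvt[OF s(1) square Ck_on_2_D(1)[OF A f] Ck_on_2_D(2)[OF A f]])
    have "dist (D (p + a *\<^sub>R v + b *\<^sub>R w)) (D p) < e"
      using d(2) near[of a s b] ab s by simp
    then show ?case using eq s by simp
  qed
qed

lemma dd_dd_commute_real:
  fixes f :: "'a::real_normed_vector \<Rightarrow> real"
  assumes "open A" "p \<in> A" "Ck_on 2 A f"
  shows "dd (\<lambda>q. dd f q v) p w = dd (\<lambda>q. dd f q w) p v"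
proof -
  have swap: "f (p + s *\<^sub>R w + s *\<^sub>R v) - f (p + s *\<^sub>R w) - f (p + s *\<^sub>R v) + f p
      = f (p + s *\<^sub>R v + s *\<^sub>R w) - f (p + s *\<^sub>R v) - f (p + s *\<^sub>R w) + f p" for s
    by (simp add: algebra_simps)
  have "((\<lambda>s. (f (p + s *\<^sub>R v + s *\<^sub>R w) - f (p + s *\<^sub>R v) - f (p + s *\<^sub>R w) + f p) / s\<^sup>2)
           \<longlongrightarrow> dd (\<lambda>q. dd f q w) p v) (at_right 0)"
    using second_difference_quotient_tendsto[OF assms, of w v] unfolding swap .
  then show ?thesis
    by (rule tendsto_unique[OF trivial_limit_at_right_real second_difference_quotient_tendsto[OF assms]])
qed

lemma dd_dd_commute:
  fixes f :: "'a::real_normed_vector \<Rightarrow> 'b::euclidean_space"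
  assumes A: "open A" and p: "p \<in> A" and f: "Ck_on 2 A f"
  shows "dd (\<lambda>q. dd f q v) p w = dd (\<lambda>q. dd f q w) p v"
proof (rule euclidean_eqI)
  fix b :: 'b
  have component: "dd (\<lambda>q. dd (\<lambda>q. f q \<bullet> b) q x) p y = dd (\<lambda>q. dd f q x) p y \<bullet> b" for x y
  proof -
    have "dd (\<lambda>q. dd (\<lambda>q. f q \<bullet> b) q x) p = dd (\<lambda>q. dd f q x \<bullet> b) p"
      by (rule dd_cong_open[OF A p])
        (rule dd_bounded_linear_comp[OF bounded_linear_inner_left Ck_on_2_D(1)[OF A f]])
    then show ?thesis
      using dd_bounded_linear_comp[OF bounded_linear_inner_left Ck_on_2_D(2)[OF A f p]] by simp
  qed
  show "dd (\<lambda>q. dd f q v) p w \<bullet> b = dd (\<lambda>q. dd f q w) p v \<bullet> b"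
    using dd_dd_commute_real[OF A p Ck_on_bounded_linear[OF A bounded_linear_inner_left[of b] f]]
    by (simp add: component)
qed

section \<open>Vertical derivatives of homogeneous functions\<close>

lemma dd_euclidean_expansion:
  fixes F :: "'a::euclidean_space \<Rightarrow> 'b::real_normed_vector"
  assumes "F differentiable at q"
  shows "dd F q w = (\<Sum>b\<in>Basis. (w \<bullet> b) *\<^sub>R dd F q b)"
proof -
  have "dd F q w = dd F q (\<Sum>b\<in>Basis. (w \<bullet> b) *\<^sub>R b)"
    by (simp add: euclidean_representation)
  then show ?thesis
    by (simp add: linear_sum[OF linear_dd[OF assms]] linear_scale[OF linear_dd[OF assms]] o_def)
qed

lemma has_derivative_dd_along:
  fixes F :: "'a::euclidean_space \<Rightarrow> 'b::real_normed_vector"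
  assumes A: "open A" and p: "p \<in> A" and F: "\<And>q. q \<in> A \<Longrightarrow> F differentiable at q"
    and dF: "\<And>b. b \<in> Basis \<Longrightarrow> (\<lambda>q. dd F q b) differentiable at p"
    and W: "W differentiable at p"
  shows "((\<lambda>q. dd F q (W q)) has_derivative
           (\<lambda>u. dd F p (dd W p u) + dd (\<lambda>q. dd F q (W p)) p u)) (at p)"
proof -
  have fixed_direction: "dd (\<lambda>q. dd F q w) p u = (\<Sum>b\<in>Basis. (w \<bullet> b) *\<^sub>R dd (\<lambda>q. dd F q b) p u)" for w u
  proof -
    have "dd (\<lambda>q. dd F q w) p = dd (\<lambda>q. \<Sum>b\<in>Basis. (w \<bullet> b) *\<^sub>R dd F q b) p"
      by (rule dd_cong_open[OF A p]) (rule dd_euclidean_expansion[OF F])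
    also have "\<dots> = (\<lambda>u. \<Sum>b\<in>Basis. (w \<bullet> b) *\<^sub>R dd (\<lambda>q. dd F q b) p u)"
      by (rule has_derivative_imp_dd, rule has_derivative_sum, rule has_derivative_scaleR_right,
          rule has_derivative_dd, erule dF)
    finally show ?thesis by simp
  qed
  have "((\<lambda>q. \<Sum>b\<in>Basis. (W q \<bullet> b) *\<^sub>R dd F q b) has_derivative
      (\<lambda>u. \<Sum>b\<in>Basis. (W p \<bullet> b) *\<^sub>R dd (\<lambda>q. dd F q b) p u + (dd W p u \<bullet> b) *\<^sub>R dd F p b)) (at p)"
    by (rule has_derivative_sum, rule has_derivative_scaleR, rule has_derivative_inner_left,
        rule has_derivative_dd[OF W], rule has_derivative_dd, erule dF)
  then have "((\<lambda>q. dd F q (W q)) has_derivative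
      (\<lambda>u. \<Sum>b\<in>Basis. (W p \<bullet> b) *\<^sub>R dd (\<lambda>q. dd F q b) p u + (dd W p u \<bullet> b) *\<^sub>R dd F p b)) (at p)"
    by (rule has_derivative_transform_within_open[OF _ A p]) (simp add: dd_euclidean_expansion[OF F])
  moreover have "(\<lambda>u. \<Sum>b\<in>Basis. (W p \<bullet> b) *\<^sub>R dd (\<lambda>q. dd F q b) p u + (dd W p u \<bullet> b) *\<^sub>R dd F p b)
      = (\<lambda>u. dd F p (dd W p u) + dd (\<lambda>q. dd F q (W p)) p u)"
  proof
    fix u
    show "(\<Sum>b\<in>Basis. (W p \<bullet> b) *\<^sub>R dd (\<lambda>q. dd F q b) p u + (dd W p u \<bullet> b) *\<^sub>R dd F p b)
        = dd F p (dd W p u) + dd (\<lambda>q. dd F q (W p)) p u"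
      unfolding fixed_direction[of "W p"] dd_euclidean_expansion[OF F[OF p], of "dd W p u"] by (simp add: sum.distrib)
  qed
  ultimately show ?thesis by simp
qed

lemma bounded_linear_liouville: "bounded_linear liouville"
  unfolding liouville_def[abs_def] by (intro bounded_linear_Pair bounded_linear_zero bounded_linear_snd)

lemma open_slit: "open U \<Longrightarrow> open (slit U)"
proof -
  assume "open U"
  have "slit U = U \<times> (UNIV - {0})" unfolding slit_def by auto
  then show ?thesis using \<open>open U\<close> by (simp add: open_Times open_Diff)
qed

lemma dd_liouville_pos_hom1:
  assumes hom: "pos_hom1 U P" and q: "q \<in> slit U" and P: "P differentiable at q"
  shows "dd P q (liouville q) = P q"
proof -
  obtain x y where xy: "q = (x, y)" "x \<in> U" "y \<noteq> 0"
    using q unfolding slit_def by (cases q) auto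
  have "((\<lambda>s. P ((x, 0) + s *\<^sub>R (0, y))) has_real_derivative dd P q (0, y)) (at 1)"
    using has_real_derivative_along_line[of P "(x, 0)" 1 "(0, y)"] P xy(1) by simp
  then have "((\<lambda>s. P (x, s *\<^sub>R y)) has_real_derivative dd P q (0, y)) (at 1)"
    by simp
  moreover have "((\<lambda>s. P (x, s *\<^sub>R y)) has_real_derivative P q) (at 1)"
  proof (rule has_field_derivative_transform_within_open[of "\<lambda>s. s * P q"])
    show "((\<lambda>s. s * P q) has_real_derivative P q) (at 1)"
      by (auto intro!: derivative_eq_intros)
    show "\<And>s. s \<in> {0<..} \<Longrightarrow> s * P q = P (x, s *\<^sub>R y)"
      using hom xy unfolding pos_hom1_def by simp
  qed auto
  ultimately show ?thesis
    using DERIV_unique xy(1) by (simp add: liouville_def)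
qed

lemma dd_vertical_liouville_homogeneous:
  fixes f :: "'n::finite tpt \<Rightarrow> 'b::euclidean_space"
  assumes A: "open A" and p: "p \<in> A" and f: "Ck_on 2 A f"
    and hom: "\<And>q. q \<in> A \<Longrightarrow> dd f q (liouville q) = k *\<^sub>R f q"
  shows "dd (\<lambda>q. dd f q (0, w)) p (liouville p) = (k - 1) *\<^sub>R dd f p (0, w)"
proof -
  have "k *\<^sub>R dd f p (0, w) = dd (\<lambda>q. dd f q (liouville q)) p (0, w)"
    using dd_cong_open[OF A p hom] dd_bounded_linear_comp[OF bounded_linear_scaleR_right Ck_on_2_D(1)[OF A f p]]
    by simp
  also have "\<dots> = dd f p (0, w) + dd (\<lambda>q. dd f q (liouville p)) p (0, w)"
  proof -
    have "dd (\<lambda>q. dd f q (liouville q)) p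
        = (\<lambda>u. dd f p (liouville u) + dd (\<lambda>q. dd f q (liouville p)) p u)"
      using has_derivative_imp_dd[OF has_derivative_dd_along[OF A p Ck_on_2_D(1)[OF A f] Ck_on_2_D(2)[OF A f p]
            bounded_linear_imp_differentiable[OF bounded_linear_liouville]]]
      unfolding dd_bounded_linear_map[OF bounded_linear_liouville] .
    then show ?thesis by (simp add: liouville_def)
  qed
  also have "dd (\<lambda>q. dd f q (liouville p)) p (0, w) = dd (\<lambda>q. dd f q (0, w)) p (liouville p)"
    by (rule dd_dd_commute[OF A p f])
  finally show ?thesis by (simp add: algebra_simps)
qed

section \<open>Deforming a spray by a multiple of the Liouville field\<close>

lemma sprayG_deformed:
  "sprayG (\<lambda>q. S q - (2 * lam * P q) *\<^sub>R liouville q) = (\<lambda>q. sprayG S q + (lam * P q) *\<^sub>R snd q)"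
  by (simp add: fun_eq_iff sprayG_def liouville_def algebra_simps)

lemma dd_sprayG_deformed:
  assumes G: "sprayG S differentiable at q" and P: "P differentiable at q"
  shows "dd (sprayG (\<lambda>q. S q - (2 * lam * P q) *\<^sub>R liouville q)) q v
       = dd (sprayG S) q v + (lam * P q) *\<^sub>R snd v + (lam * dd P q v) *\<^sub>R snd q"
proof -
  have "((\<lambda>q. sprayG S q + (lam * P q) *\<^sub>R snd q) has_derivative
      (\<lambda>v. dd (sprayG S) q v + ((lam * P q) *\<^sub>R snd v + (lam * dd P q v) *\<^sub>R snd q))) (at q)"
    by (rule has_derivative_add[OF has_derivative_dd[OF G] has_derivative_scaleR[OF
          has_derivative_mult_right[OF has_derivative_dd[OF P]] has_derivative_snd[OF has_derivative_ident]]])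
  from has_derivative_imp_dd[OF this] show ?thesis
    unfolding sprayG_deformed by (simp add: add.assoc)
qed

lemma GJ_deformed:
  assumes "sprayG S differentiable at q" "P differentiable at q"
  shows "GJ (\<lambda>q. S q - (2 * lam * P q) *\<^sub>R liouville q) q w
       = GJ S q w + (lam * P q) *\<^sub>R w + (lam * dd P q (0, w)) *\<^sub>R snd q"
  unfolding GJ_def dd_sprayG_deformed[OF assms] by simp

lemma hproj_deformed:
  assumes "sprayG S differentiable at p" "P differentiable at p"
  shows "hproj (\<lambda>q. S q - (2 * lam * P q) *\<^sub>R liouville q) p X
       = hproj S p X - lam *\<^sub>R (P p *\<^sub>R Jv X + dJ P p X *\<^sub>R liouville p)"
  unfolding hproj_def GJ_deformed[OF assms] unfolding dJ_def Jv_def liouville_def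
  by (simp add: algebra_simps)

lemma vproj_deformed:
  assumes "sprayG S differentiable at p" "P differentiable at p"
  shows "vproj (\<lambda>q. S q - (2 * lam * P q) *\<^sub>R liouville q) p X
       = vproj S p X + lam *\<^sub>R (P p *\<^sub>R Jv X + dJ P p X *\<^sub>R liouville p)"
  unfolding vproj_def GJ_deformed[OF assms] unfolding dJ_def Jv_def liouville_def
  by (simp add: algebra_simps)

section \<open>Sprays and holonomy invariant functions\<close>

locale chart_spray =
  fixes U :: "(real^'n::finite) set" and S :: "'n tpt \<Rightarrow> 'n tpt"
  assumes open_U: "open U" and spray: "is_spray U S"
begin

lemmas open_domain = open_slit[OF open_U]

lemma smooth_sprayG: "smooth_on (slit U) (sprayG S)"
  unfolding sprayG_def
  using smooth_on_bounded_linear[OF open_domain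
      bounded_linear_compose[OF bounded_linear_scaleR_right bounded_linear_snd]] spray
  unfolding is_spray_def by blast

lemma sprayG_differentiable: "q \<in> slit U \<Longrightarrow> sprayG S differentiable at q"
  by (rule smooth_on_imp_differentiable_at[OF open_domain smooth_sprayG])

lemma GJ_differentiable: "p \<in> slit U \<Longrightarrow> (\<lambda>q. GJ S q w) differentiable at p"
  unfolding GJ_def by (rule smooth_on_imp_differentiable_at[OF open_domain smooth_on_dd[OF smooth_sprayG]])

lemma spray_eq: "q \<in> slit U \<Longrightarrow> S q = (snd q, -2 *\<^sub>R sprayG S q)"
  using spray unfolding is_spray_def Jv_def liouville_def sprayG_def
  by (simp add: prod_eq_iff)

lemma dd_sprayG_liouville:
  assumes q: "q \<in> slit U"
  shows "dd (sprayG S) q (liouville q) = 2 *\<^sub>R sprayG S q"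
proof -
  have "dd S q (liouville q) - liouville (S q) = S q"
    using spray q
    unfolding is_spray_def lie_bracket_def dd_bounded_linear_map[OF bounded_linear_liouville] by simp
  then have "snd (dd S q (liouville q)) = 2 *\<^sub>R snd (S q)"
    unfolding liouville_def by (simp add: prod_eq_iff scaleR_2)
  moreover have "dd (sprayG S) q v = - (1/2) *\<^sub>R snd (dd S q v)" for v
    unfolding sprayG_def
    using dd_bounded_linear_comp[OF bounded_linear_compose[OF bounded_linear_scaleR_right bounded_linear_snd]
        smooth_on_imp_differentiable_at[OF open_domain _ q]] spray
    unfolding is_spray_def by blast
  ultimately show ?thesis by (simp add: sprayG_def)
qed

lemma GJ_snd: "q \<in> slit U \<Longrightarrow> GJ S q (snd q) = 2 *\<^sub>R sprayG S q"
  using dd_sprayG_liouville unfolding GJ_def liouville_def by simp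

lemma hproj_spray: "q \<in> slit U \<Longrightarrow> hproj S q (S q) = S q"
  using spray_eq[of q] GJ_snd[of q] unfolding hproj_def by simp

lemma dd_spray_vertical:
  assumes p: "p \<in> slit U"
  shows "dd S p (0, w) = (w, -2 *\<^sub>R GJ S p w)"
proof -
  have "dd S p = dd (\<lambda>q. (snd q, -2 *\<^sub>R sprayG S q)) p"
    by (rule dd_cong_open[OF open_domain p spray_eq])
  also have "\<dots> = (\<lambda>v. (snd v, -2 *\<^sub>R dd (sprayG S) p v))"
    by (rule has_derivative_imp_dd[OF has_derivative_Pair[OF has_derivative_snd[OF has_derivative_ident]
          has_derivative_scaleR_right[OF has_derivative_dd[OF sprayG_differentiable[OF p]]]]])
  finally show ?thesis unfolding GJ_def by simp
qed

lemma dd_GJ_liouville: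
  assumes "p \<in> slit U"
  shows "dd (\<lambda>q. GJ S q w) p (liouville p) = GJ S p w"
  using dd_vertical_liouville_homogeneous[OF open_domain assms smooth_on_Ck_on[OF smooth_sprayG]
      dd_sprayG_liouville]
  unfolding GJ_def by simp

end

locale holonomy_invariant_function = chart_spray U S for U :: "(real^'n::finite) set" and S +
  fixes P :: "'n tpt \<Rightarrow> real"
  assumes smooth_P: "smooth_on (slit U) P" and hom_P: "pos_hom1 U P"
    and holonomy: "holonomy_invariant U S P"
begin

lemma P_differentiable: "q \<in> slit U \<Longrightarrow> P differentiable at q"
  by (rule smooth_on_imp_differentiable_at[OF open_domain smooth_P])

lemma dP_vertical_differentiable: "p \<in> slit U \<Longrightarrow> (\<lambda>q. dd P q (0, w)) differentiable at p"
  by (rule smooth_on_imp_differentiable_at[OF open_domain smooth_on_dd[OF smooth_P]])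

lemma dd_P_horizontal:
  assumes q: "q \<in> slit U"
  shows "dd P q (w, 0) = dd P q (0, GJ S q w)"
proof -
  have "dd P q (hproj S q (w, 0)) = 0"
    using holonomy q unfolding holonomy_invariant_def dh_def by blast
  moreover have "hproj S q (w, 0) = (w, 0) - (0, GJ S q w)"
    unfolding hproj_def by simp
  ultimately have "dd P q ((w, 0) - (0, GJ S q w)) = 0"
    by metis
  then show ?thesis
    unfolding linear_diff[OF linear_dd[OF P_differentiable[OF q]]] by simp
qed

lemma dd_P_spray: "q \<in> slit U \<Longrightarrow> dd P q (S q) = 0"
  using holonomy hproj_spray unfolding holonomy_invariant_def dh_def by metis

lemma dd_P_liouville: "q \<in> slit U \<Longrightarrow> dd P q (liouville q) = P q"
  by (rule dd_liouville_pos_hom1[OF hom_P _ P_differentiable])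

lemma dd_dJ_liouville:
  assumes "p \<in> slit U"
  shows "dd (\<lambda>q. dd P q (0, w)) p (liouville p) = 0"
  using dd_vertical_liouville_homogeneous[OF open_domain assms smooth_on_Ck_on[OF smooth_P], of 1]
    dd_P_liouville
  by simp

lemma dd_dJ_spray:
  assumes p: "p \<in> slit U"
  shows "dd (\<lambda>q. dd P q (0, w)) p (S p) = dd P p (0, GJ S p w)"
proof -
  have P2: "Ck_on 2 (slit U) P" by (rule smooth_on_Ck_on[OF smooth_P])
  have "dd (\<lambda>q. dd P q (S q)) p = dd (\<lambda>q. 0) p"
    by (rule dd_cong_open[OF open_domain p]) (rule dd_P_spray)
  then have "0 = dd (\<lambda>q. dd P q (S q)) p (0, w)"
    using has_derivative_imp_dd[OF has_derivative_const] by metis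
  also have "\<dots> = dd P p (dd S p (0, w)) + dd (\<lambda>q. dd P q (S p)) p (0, w)"
    using has_derivative_imp_dd[OF has_derivative_dd_along[OF open_domain p Ck_on_2_D(1)[OF open_domain P2]
          Ck_on_2_D(2)[OF open_domain P2 p] smooth_on_imp_differentiable_at[OF open_domain _ p]]] spray
    unfolding is_spray_def by simp
  also have "dd (\<lambda>q. dd P q (S p)) p (0, w) = dd (\<lambda>q. dd P q (0, w)) p (S p)"
    by (rule dd_dd_commute[OF open_domain p P2])
  also have "dd S p (0, w) = (w, 0) - 2 *\<^sub>R (0, GJ S p w)"
    using dd_spray_vertical[OF p] by simp
  also have "dd P p \<dots> = - dd P p (0, GJ S p w)"
    unfolding dd_diff_scaleR[OF P_differentiable[OF p]] dd_P_horizontal[OF p] by simp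
  finally show ?thesis by simp
qed

lemma dd_GJ_deformed:
  assumes p: "p \<in> slit U"
  shows "dd (\<lambda>q. GJ (\<lambda>q. S q - (2 * lam * P q) *\<^sub>R liouville q) q w) p v
       = dd (\<lambda>q. GJ S q w) p v + (lam * dd P p v) *\<^sub>R w
         + ((lam * dd P p (0, w)) *\<^sub>R snd v + (lam * dd (\<lambda>q. dd P q (0, w)) p v) *\<^sub>R snd p)"
proof -
  have "dd (\<lambda>q. GJ (\<lambda>q. S q - (2 * lam * P q) *\<^sub>R liouville q) q w) p
      = dd (\<lambda>q. GJ S q w + (lam * P q) *\<^sub>R w + (lam * dd P q (0, w)) *\<^sub>R snd q) p"
    by (rule dd_cong_open[OF open_domain p]) (rule GJ_deformed[OF sprayG_differentiable P_differentiable])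
  also have "\<dots> = (\<lambda>v. dd (\<lambda>q. GJ S q w) p v + (lam * dd P p v) *\<^sub>R w
      + ((lam * dd P p (0, w)) *\<^sub>R snd v + (lam * dd (\<lambda>q. dd P q (0, w)) p v) *\<^sub>R snd p))"
    by (rule has_derivative_imp_dd[OF has_derivative_add[OF has_derivative_add[OF
          has_derivative_dd[OF GJ_differentiable[OF p]]
          has_derivative_scaleR_left[OF
            has_derivative_mult_right[OF has_derivative_dd[OF P_differentiable[OF p]]]]]
          has_derivative_scaleR[OF
            has_derivative_mult_right[OF has_derivative_dd[OF dP_vertical_differentiable[OF p]]]
            has_derivative_snd[OF has_derivative_ident]]]])
  finally show ?thesis by simp
qed

lemma GJ_deformed_twice:
  assumes p: "p \<in> slit U"
  shows "GJ (\<lambda>q. S q - (2 * lam * P q) *\<^sub>R liouville q) p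
           (GJ (\<lambda>q. S q - (2 * lam * P q) *\<^sub>R liouville q) p w)
       = GJ S p (GJ S p w) + (2 * lam * P p) *\<^sub>R GJ S p w + (2 * lam * dd P p (0, w)) *\<^sub>R sprayG S p
         + (lam\<^sup>2 * (P p)\<^sup>2) *\<^sub>R w
         + (lam * dd P p (0, GJ S p w) + 3 * lam\<^sup>2 * P p * dd P p (0, w)) *\<^sub>R snd p"
proof -
  define N where "N = GJ S p"
  define a where "a = (\<lambda>w. dd P p (0, w))"
  have linN: "linear N"
    unfolding N_def GJ_def by (rule linear_dd_vertical[OF sprayG_differentiable[OF p]])
  have lina: "linear a"
    unfolding a_def by (rule linear_dd_vertical[OF P_differentiable[OF p]])
  have Ny: "N (snd p) = 2 *\<^sub>R sprayG S p"
    unfolding N_def by (rule GJ_snd[OF p])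
  have ay: "a (snd p) = P p"
    using dd_P_liouville[OF p] unfolding a_def liouville_def .
  have a_eq: "dd P p (0, u) = a u" for u
    unfolding a_def ..
  have GJt: "GJ (\<lambda>q. S q - (2 * lam * P q) *\<^sub>R liouville q) p u
      = N u + (lam * P p) *\<^sub>R u + (lam * a u) *\<^sub>R snd p" for u
    unfolding N_def a_def by (rule GJ_deformed[OF sprayG_differentiable[OF p] P_differentiable[OF p]])
  show ?thesis
    unfolding GJt N_def[symmetric] a_eq
    unfolding linear_add[OF linN] linear_scale[OF linN] linear_add[OF lina] linear_scale[OF lina] Ny ay
    by (simp add: vec_eq_iff algebra_simps power2_eq_square)
qed

lemma jacobiR_deformed:
  assumes p: "p \<in> slit U"
  shows "jacobiR (\<lambda>q. S q - (2 * lam * P q) *\<^sub>R liouville q) p xi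
       = jacobiR S p xi + lam\<^sup>2 *\<^sub>R ((P p)\<^sup>2 *\<^sub>R xi - (P p * dd P p (0, xi)) *\<^sub>R snd p)"
proof -
  define St where "St = (\<lambda>q. S q - (2 * lam * P q) *\<^sub>R liouville q)"
  define c where "c = 2 * lam * P p"
  have Stp: "St p = S p - c *\<^sub>R liouville p"
    unfolding St_def c_def ..
  have horizontal_sprayG: "dd (sprayG St) p (xi, 0) = dd (sprayG S) p (xi, 0) + (lam * dd P p (0, GJ S p xi)) *\<^sub>R snd p"
    unfolding St_def dd_sprayG_deformed[OF sprayG_differentiable[OF p] P_differentiable[OF p]]
      dd_P_horizontal[OF p]
    by simp
  have GJ_along_spray: "dd (\<lambda>q. GJ St q xi) p (St p)
      = dd (\<lambda>q. GJ S q xi) p (S p) - c *\<^sub>R GJ S p xi - (lam * c * P p) *\<^sub>R xi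
        + (lam * dd P p (0, xi)) *\<^sub>R (-2 *\<^sub>R sprayG S p - c *\<^sub>R snd p)
        + (lam * dd P p (0, GJ S p xi)) *\<^sub>R snd p"
    unfolding St_def dd_GJ_deformed[OF p] unfolding St_def[symmetric] Stp
      dd_diff_scaleR[OF GJ_differentiable[OF p]] dd_diff_scaleR[OF P_differentiable[OF p]]
      dd_diff_scaleR[OF dP_vertical_differentiable[OF p]]
      dd_GJ_liouville[OF p] dd_P_spray[OF p] dd_P_liouville[OF p] dd_dJ_spray[OF p] dd_dJ_liouville[OF p]
    using spray_eq[OF p]
    by (simp add: c_def liouville_def algebra_simps)
  show ?thesis
    unfolding St_def[symmetric] jacobiR_def[of St] horizontal_sprayG GJ_along_spray
    unfolding St_def GJ_deformed_twice[OF p] jacobiR_def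
    by (simp add: c_def vec_eq_iff algebra_simps power2_eq_square)
qed

lemma jacobi_deformed:
  assumes "p \<in> slit U"
  shows "jacobi (\<lambda>q. S q - (2 * lam * P q) *\<^sub>R liouville q) p X
       = jacobi S p X + lam\<^sup>2 *\<^sub>R ((P p)\<^sup>2 *\<^sub>R Jv X - (P p * dJ P p X) *\<^sub>R liouville p)"
  unfolding jacobi_def jacobiR_deformed[OF assms] unfolding dJ_def Jv_def liouville_def by simp

end

theorem lemma3p1:
  fixes U :: "(real^('n::finite)) set" and F P :: "'n tpt \<Rightarrow> real"
    and S :: "'n tpt \<Rightarrow> 'n tpt" and lam :: real
  assumes "open U"
    and "is_finsler U F"
    and "geodesic_spray U F S"
    and "smooth_on (slit U) P"
    and "pos_hom1 U P"
    and "holonomy_invariant U S P"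
  shows "\<forall>p\<in>slit U. \<forall>X.
     hproj (\<lambda>q. S q - (2 * lam * P q) *\<^sub>R liouville q) p X
       = hproj S p X - lam *\<^sub>R (P p *\<^sub>R Jv X + dJ P p X *\<^sub>R liouville p)
   \<and> vproj (\<lambda>q. S q - (2 * lam * P q) *\<^sub>R liouville q) p X
       = vproj S p X + lam *\<^sub>R (P p *\<^sub>R Jv X + dJ P p X *\<^sub>R liouville p)
   \<and> jacobi (\<lambda>q. S q - (2 * lam * P q) *\<^sub>R liouville q) p X
       = jacobi S p X + lam\<^sup>2 *\<^sub>R ((P p)\<^sup>2 *\<^sub>R Jv X - (P p * dJ P p X) *\<^sub>R liouville p)"
proof -
  have "is_spray U S"
    using assms(3) unfolding geodesic_spray_def by blast
  then interpret holonomy_invariant_function U S P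
    using assms(1,4-6) by unfold_locales
  show ?thesis
    using hproj_deformed[OF sprayG_differentiable P_differentiable]
      vproj_deformed[OF sprayG_differentiable P_differentiable] jacobi_deformed
    by blast
qed

end
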